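(* In the converse setting below, \[ \sum_{i=1}^n I(X_i;W_1\mid Y_1^{i-1}S^{i-1})\ \ge\ \frac{(1-\epsilon)N_1L\log_2 q-h_2(\epsilon)}{1-\delta_1}. \]
   Context: Converse setting. $0<\delta_1,\delta_2<1$, $0<\epsilon\le 1/2$. Messages $W_1$ uniform on $\mathbb{F}_q^{LN_1}$ and $W_2$ uniform on $\mathbb{F}_q^{LN_2}$, and Alice's private randomness $\Theta_A$, are mutually independent. Channel states $S_1,\dots,S_n\in\{B,C,BC,\emptyset\}$ are i.i.d., independent of $(W_1,W_2,\Theta_A)$, with Bob receiving with probability $1-\delta_1$ and Calvin with probability $1-\delta_2$, independently. Inputs $X_i=f_i(W_1,W_2,\Theta_A,S^{i-1})\in\mathbb{F}_q^L$ (honest acknowledgments). Outputs: $Y_{1,i}=X_i$ if Bob receives packet $i$, else $\perp$; $Y_{2,i}=X_i$ if Calvin receives packet $i$, else $\perp$. $V^i=(V_1,\dots,V_i)$ ($V^0$ empty). There is a decoder with $\Pr\{\phi_1(Y_1^n)\ne W_1\}<\epsilon$. $h_2$ is the binary entropy function; logarithms base 2. *)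

theory Defs
  imports "HOL-Probability.Probability"
begin

text \<open>Channel states: Bob only, Calvin only, both, nobody.\<close>
datatype chstate = B | C | BC | Empt

definition bob_rx :: "chstate \<Rightarrow> bool" where
  "bob_rx s \<longleftrightarrow> s = B \<or> s = BC"

definition calvin_rx :: "chstate \<Rightarrow> bool" where
  "calvin_rx s \<longleftrightarrow> s = C \<or> s = BC"

definition state_pmf :: "real \<Rightarrow> real \<Rightarrow> chstate pmf" where
  "state_pmf d1 d2 = map_pmf (\<lambda>(b, c). if b then (if c then BC else B) else (if c then C else Empt))
      (pair_pmf (bernoulli_pmf (1 - d1)) (bernoulli_pmf (1 - d2)))"

text \<open>i.i.d. states S_1..S_n (indexed 1..n; value outside is irrelevant).\<close>
definition states_pmf :: "nat \<Rightarrow> real \<Rightarrow> real \<Rightarrow> (nat \<Rightarrow> chstate) pmf" where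
  "states_pmf n d1 d2 = Pi_pmf {1..n} Empt (\<lambda>_. state_pmf d1 d2)"

text \<open>Vectors in F_q^k as lists of length k.\<close>
definition vecs :: "nat \<Rightarrow> 'f list set" where
  "vecs k = {xs. length xs = k}"

text \<open>Joint distribution of (W1, W2, Theta_A, S): mutually independent,
  messages uniform.\<close>
definition joint_pmf :: "nat \<Rightarrow> nat \<Rightarrow> nat \<Rightarrow> 'r pmf \<Rightarrow> nat \<Rightarrow> real \<Rightarrow> real
    \<Rightarrow> ('f::{finite,field} list \<times> 'f list \<times> 'r \<times> (nat \<Rightarrow> chstate)) pmf" where
  "joint_pmf L N1 N2 \<Theta> n d1 d2 =
     pair_pmf (pmf_of_set (vecs (L * N1)))
       (pair_pmf (pmf_of_set (vecs (L * N2))) (pair_pmf \<Theta> (states_pmf n d1 d2)))"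

definition Spast :: "nat \<Rightarrow> (nat \<Rightarrow> chstate) \<Rightarrow> chstate list" where
  "Spast i s = map s [1..<i]"

definition Xin :: "(nat \<Rightarrow> 'f list \<Rightarrow> 'f list \<Rightarrow> 'r \<Rightarrow> chstate list \<Rightarrow> 'f list) \<Rightarrow> nat
    \<Rightarrow> ('f list \<times> 'f list \<times> 'r \<times> (nat \<Rightarrow> chstate)) \<Rightarrow> 'f list" where
  "Xin f i \<omega> = (case \<omega> of (w1, w2, \<theta>, s) \<Rightarrow> f i w1 w2 \<theta> (Spast i s))"

text \<open>Bob's output Y_{1,i}: X_i if received, else None (= \<bottom>).\<close>
definition Y1 :: "(nat \<Rightarrow> 'f list \<Rightarrow> 'f list \<Rightarrow> 'r \<Rightarrow> chstate list \<Rightarrow> 'f list) \<Rightarrow> nat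
    \<Rightarrow> ('f list \<times> 'f list \<times> 'r \<times> (nat \<Rightarrow> chstate)) \<Rightarrow> 'f list option" where
  "Y1 f i \<omega> = (if bob_rx (snd (snd (snd \<omega>)) i) then Some (Xin f i \<omega>) else None)"

definition Y1past :: "(nat \<Rightarrow> 'f list \<Rightarrow> 'f list \<Rightarrow> 'r \<Rightarrow> chstate list \<Rightarrow> 'f list) \<Rightarrow> nat
    \<Rightarrow> ('f list \<times> 'f list \<times> 'r \<times> (nat \<Rightarrow> chstate)) \<Rightarrow> 'f list option list" where
  "Y1past f i \<omega> = map (\<lambda>j. Y1 f j \<omega>) [1..<i]"

definition cmi :: "'a pmf \<Rightarrow> ('a \<Rightarrow> 'x) \<Rightarrow> ('a \<Rightarrow> 'y) \<Rightarrow> ('a \<Rightarrow> 'z) \<Rightarrow> real" where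
  "cmi P X Y Z = prob_space.conditional_mutual_information (measure_pmf P) 2
     (count_space (X ` space (measure_pmf P))) (count_space (Y ` space (measure_pmf P)))
     (count_space (Z ` space (measure_pmf P))) X Y Z"

definition h2 :: "real \<Rightarrow> real" where
  "h2 e = - e * log 2 e - (1 - e) * log 2 (1 - e)"

end

theory Submission
  imports Defs
begin

(*
  Write H_i = H(W1 | Y1^(i-1), S^(i-1)) for Bob's remaining uncertainty before slot i and
  G_i = H(W1 | X_i, Y1^(i-1), S^(i-1)), so that the i-th summand is I_i = H_i - G_i.
  The state S_i is independent of (W1, X_i, Y1^(i-1), S^(i-1)), and Bob sees X_i exactly
  when he receives packet i, which happens with probability 1 - d1.  Hence
      H_(i+1) = (1 - d1) G_i + d1 H_i,   i.e.   I_i = (H_i - H_(i+1)) / (1 - d1),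
  and the sum telescopes to (H_1 - H_(n+1)) / (1 - d1).  Finally H_1 = N1 L log q since W1
  is uniform, and H_(n+1) <= h2(eps) + eps N1 L log q by Fano's inequality.
*)

section \<open>Conditional entropy of finitely supported distributions\<close>

(* H(W | Z) in bits, for a pair (W, Z) distributed according to D: the expectation of
   -log p(w | z) = -log (p(w, z) / p(z)). *)
definition cond_entropy :: "('w \<times> 'z) pmf \<Rightarrow> real" where
  "cond_entropy D = measure_pmf.expectation D (\<lambda>t. - log 2 (pmf D t / pmf (map_pmf snd D) (snd t)))"

definition cond_entropy_rv :: "'a pmf \<Rightarrow> ('a \<Rightarrow> 'w) \<Rightarrow> ('a \<Rightarrow> 'z) \<Rightarrow> real" where
  "cond_entropy_rv P W Z = cond_entropy (map_pmf (\<lambda>\<omega>. (W \<omega>, Z \<omega>)) P)"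

lemma cond_entropy_map_sum:
  assumes "finite (set_pmf D)"
  shows "cond_entropy (map_pmf g D) = (\<Sum>v\<in>set_pmf D. pmf D v *
           - log 2 (pmf (map_pmf g D) (g v) / pmf (map_pmf snd (map_pmf g D)) (snd (g v))))"
proof -
  have "cond_entropy (map_pmf g D) = measure_pmf.expectation D
          (\<lambda>v. - log 2 (pmf (map_pmf g D) (g v) / pmf (map_pmf snd (map_pmf g D)) (snd (g v))))"
    unfolding cond_entropy_def by simp
  also have "\<dots> = (\<Sum>v\<in>set_pmf D. - log 2 (pmf (map_pmf g D) (g v) / pmf (map_pmf snd (map_pmf g D)) (snd (g v))) * pmf D v)"
    by (rule integral_measure_pmf_real) (use assms in auto)
  finally show ?thesis by (simp add: mult.commute)
qed

lemma cond_entropy_sum: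
  assumes "finite (set_pmf D)"
  shows "cond_entropy D = (\<Sum>t\<in>set_pmf D. pmf D t * - log 2 (pmf D t / pmf (map_pmf snd D) (snd t)))"
  using cond_entropy_map_sum[OF assms, of id] by simp

lemma cond_entropy_relabel:
  assumes "inj h"
  shows "cond_entropy (map_pmf (\<lambda>(w, z). (w, h z)) D) = cond_entropy D"
proof -
  let ?g = "\<lambda>(w, z). (w, h z)"
  have inj_g: "inj ?g" using assms by (auto simp: inj_def)
  have snd_g: "map_pmf snd (map_pmf ?g D) = map_pmf h (map_pmf snd D)"
    by (simp add: map_pmf_comp case_prod_beta)
  have "cond_entropy (map_pmf ?g D) = measure_pmf.expectation D
          (\<lambda>t. - log 2 (pmf (map_pmf ?g D) (?g t) / pmf (map_pmf snd (map_pmf ?g D)) (snd (?g t))))"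
    unfolding cond_entropy_def by simp
  also have "\<dots> = cond_entropy D"
    unfolding cond_entropy_def snd_g
    by (rule Bochner_Integration.integral_cong[OF refl])
       (simp add: case_prod_beta pmf_map_inj'[OF inj_g, of _ "(fst _, snd _)", simplified]
                  pmf_map_inj'[OF assms])
  finally show ?thesis .
qed

lemma cond_entropy_uniform:
  assumes "finite U" "U \<noteq> {}"
  shows "cond_entropy (map_pmf (\<lambda>w. (w, c)) (pmf_of_set U)) = log 2 (card U)"
proof -
  define D where "D = map_pmf (\<lambda>w. (w, c)) (pmf_of_set U)"
  have inj: "inj (\<lambda>w. (w, c))" by (auto simp: inj_def)
  have set_D: "set_pmf D = (\<lambda>w. (w, c)) ` U" using assms by (simp add: D_def)
  have snd_D: "map_pmf snd D = return_pmf c" by (simp add: D_def map_pmf_comp)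
  have pmf_D: "pmf D (w, c) = 1 / card U" if "w \<in> U" for w
    using that assms unfolding D_def by (simp add: pmf_map_inj'[OF inj])
  have "cond_entropy D = (\<Sum>t\<in>(\<lambda>w. (w, c)) ` U. pmf D t * - log 2 (pmf D t / pmf (map_pmf snd D) (snd t)))"
    using cond_entropy_sum[of D] set_D assms by simp
  also have "\<dots> = (\<Sum>w\<in>U. (1 / card U) * - log 2 (1 / card U))"
    by (subst sum.reindex) (use inj in \<open>auto simp: inj_on_def pmf_D snd_D intro!: sum.cong\<close>)
  also have "\<dots> = log 2 (card U)"
    using assms by (simp add: log_divide)
  finally show ?thesis unfolding D_def .
qed

lemma measure_pmf_prob_as_sum:
  assumes "finite (set_pmf D)"
  shows "measure_pmf.prob D {t. Q t} = (\<Sum>t\<in>set_pmf D. if Q t then pmf D t else 0)"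
proof -
  have "(\<Sum>t\<in>set_pmf D. if Q t then pmf D t else 0) = sum (pmf D) ({t. Q t} \<inter> set_pmf D)"
    using assms by (simp add: sum.inter_filter[symmetric] Int_def conj_commute)
  also have "\<dots> = measure_pmf.prob D ({t. Q t} \<inter> set_pmf D)"
    using assms by (simp add: measure_measure_pmf_finite)
  finally show ?thesis by (simp add: measure_Int_set_pmf)
qed

lemma measure_pair_pmf_Times:
  "measure_pmf.prob (pair_pmf M N) (S \<times> T) = measure_pmf.prob M S * measure_pmf.prob N T"
proof -
  have "emeasure (pair_pmf M N) (S \<times> T) = (\<integral>\<^sup>+a. \<integral>\<^sup>+b. indicator S a * indicator T b \<partial>N \<partial>M)"
    by (simp add: nn_integral_pair_pmf' indicator_times flip: nn_integral_indicator)
  also have "\<dots> = emeasure M S * emeasure N T"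
    by (simp add: nn_integral_cmult nn_integral_multc)
  finally show ?thesis
    by (simp add: measure_def enn2real_mult)
qed

lemma cond_entropy_independent_mix:
  fixes \<sigma> :: "'y pmf" and E :: "'e pmf" and g :: "'y \<Rightarrow> 'e \<Rightarrow> 'w \<times> 'z"
  assumes fin_\<sigma>: "finite (set_pmf \<sigma>)" and fin_E: "finite (set_pmf E)"
  shows "cond_entropy (map_pmf (\<lambda>(y, v). (fst (g y v), (y, snd (g y v)))) (pair_pmf \<sigma> E))
           = (\<Sum>y\<in>set_pmf \<sigma>. pmf \<sigma> y * cond_entropy (map_pmf (g y) E))"
proof -
  define \<phi> where "\<phi> = (\<lambda>(y, v). (fst (g y v), (y, snd (g y v))))"
  define Q where "Q = pair_pmf \<sigma> E"
  have slice: "pmf (map_pmf \<phi> Q) (\<phi> (y, v)) = pmf \<sigma> y * pmf (map_pmf (g y) E) (g y v)"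
    for y v
  proof -
    have "\<phi> -` {\<phi> (y, v)} = {y} \<times> (g y -` {g y v})"
      by (auto simp: \<phi>_def prod_eq_iff)
    then show ?thesis
      by (simp add: pmf_map Q_def measure_pair_pmf_Times measure_pmf_single)
  qed
  have slice_snd: "pmf (map_pmf snd (map_pmf \<phi> Q)) (snd (\<phi> (y, v)))
                     = pmf \<sigma> y * pmf (map_pmf snd (map_pmf (g y) E)) (snd (g y v))" for y v
  proof -
    have "(\<lambda>t. snd (\<phi> t)) -` {snd (\<phi> (y, v))} = {y} \<times> ((\<lambda>t. snd (g y t)) -` {snd (g y v)})"
      by (auto simp: \<phi>_def)
    then show ?thesis
      by (simp add: map_pmf_comp pmf_map Q_def measure_pair_pmf_Times measure_pmf_single)
  qed
  have ratio: "pmf (map_pmf \<phi> Q) (\<phi> (y, v)) / pmf (map_pmf snd (map_pmf \<phi> Q)) (snd (\<phi> (y, v)))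
      = pmf (map_pmf (g y) E) (g y v) / pmf (map_pmf snd (map_pmf (g y) E)) (snd (g y v))"
    if "y \<in> set_pmf \<sigma>" for y v
    using pmf_positive[OF that] by (simp add: slice slice_snd)
  have "cond_entropy (map_pmf \<phi> Q) = (\<Sum>t\<in>set_pmf Q. pmf Q t *
           - log 2 (pmf (map_pmf \<phi> Q) (\<phi> t) / pmf (map_pmf snd (map_pmf \<phi> Q)) (snd (\<phi> t))))"
    by (rule cond_entropy_map_sum) (simp add: Q_def fin_\<sigma> fin_E)
  also have "\<dots> = (\<Sum>(y, v)\<in>set_pmf \<sigma> \<times> set_pmf E. pmf \<sigma> y * (pmf E v *
           - log 2 (pmf (map_pmf (g y) E) (g y v) / pmf (map_pmf snd (map_pmf (g y) E)) (snd (g y v)))))"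
    by (rule sum.cong) (auto simp: Q_def pmf_pair ratio[unfolded Q_def] simp del: pmf_map)
  also have "\<dots> = (\<Sum>y\<in>set_pmf \<sigma>. pmf \<sigma> y * cond_entropy (map_pmf (g y) E))"
    by (simp add: sum.cartesian_product[symmetric] cond_entropy_map_sum[OF fin_E] sum_distrib_left)
  finally show ?thesis unfolding \<phi>_def Q_def .
qed

(* This is the recursion step of the converse. *)
lemma cond_entropy_erasure:
  fixes \<sigma> :: "'y pmf" and E :: "('w \<times> 'z \<times> 'x) pmf" and b :: "'y \<Rightarrow> bool"
  assumes fin_\<sigma>: "finite (set_pmf \<sigma>)" and fin_E: "finite (set_pmf E)"
  shows "cond_entropy (map_pmf (\<lambda>(y, (w, z, x)). (w, (y, z, if b y then Some x else None)))
                                (pair_pmf \<sigma> E))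
       = measure_pmf.prob \<sigma> {y. b y} * cond_entropy (map_pmf (\<lambda>(w, z, x). (w, (x, z))) E)
       + measure_pmf.prob \<sigma> {y. \<not> b y} * cond_entropy (map_pmf (\<lambda>(w, z, x). (w, z)) E)"
    (is "_ = _ * ?H_seen + _ * ?H_erased")
proof -
  define g :: "'y \<Rightarrow> 'w \<times> 'z \<times> 'x \<Rightarrow> 'w \<times> 'z \<times> 'x option"
    where "g y = (\<lambda>(w, z, x). (w, (z, if b y then Some x else None)))" for y
  have seen: "cond_entropy (map_pmf (g y) E) = ?H_seen" if "b y" for y
  proof -
    have "map_pmf (g y) E = map_pmf (\<lambda>(w, c). (w, (\<lambda>(x, z). (z, Some x)) c))
                                      (map_pmf (\<lambda>(w, z, x). (w, (x, z))) E)"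
      using that by (auto simp: g_def map_pmf_comp intro!: map_pmf_cong)
    then show ?thesis by (simp add: cond_entropy_relabel inj_def)
  qed
  have erased: "cond_entropy (map_pmf (g y) E) = ?H_erased" if "\<not> b y" for y
  proof -
    have "map_pmf (g y) E = map_pmf (\<lambda>(w, z). (w, (z, None))) (map_pmf (\<lambda>(w, z, x). (w, z)) E)"
      using that by (auto simp: g_def map_pmf_comp intro!: map_pmf_cong)
    then show ?thesis by (simp add: cond_entropy_relabel inj_def)
  qed
  have "(\<lambda>(y, (w, z, x)). (w, (y, z, if b y then Some x else None)))
          = (\<lambda>(y, v). (fst (g y v), (y, snd (g y v))))"
    by (auto simp: g_def fun_eq_iff)
  then have "cond_entropy (map_pmf (\<lambda>(y, (w, z, x)). (w, (y, z, if b y then Some x else None)))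
                                   (pair_pmf \<sigma> E))
        = (\<Sum>y\<in>set_pmf \<sigma>. pmf \<sigma> y * cond_entropy (map_pmf (g y) E))"
    using cond_entropy_independent_mix[OF fin_\<sigma> fin_E, of g] by simp
  also have "\<dots> = (\<Sum>y\<in>set_pmf \<sigma>. (if b y then pmf \<sigma> y else 0) * ?H_seen
                                  + (if \<not> b y then pmf \<sigma> y else 0) * ?H_erased)"
    by (rule sum.cong) (auto simp: seen erased)
  also have "\<dots> = measure_pmf.prob \<sigma> {y. b y} * ?H_seen + measure_pmf.prob \<sigma> {y. \<not> b y} * ?H_erased"
    by (simp add: sum.distrib measure_pmf_prob_as_sum[OF fin_\<sigma>] sum_distrib_right)
  finally show ?thesis .
qed

section \<open>Gibbs' and Fano's inequalities\<close>

lemma log_ratio_le: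
  assumes "0 < p" "0 < r"
  shows "p * log 2 (r / p) \<le> (r - p) / ln 2"
proof -
  have "p * log 2 (r / p) = p * (ln (r / p) / ln 2)" by (simp add: log_def)
  also have "\<dots> \<le> p * ((r / p - 1) / ln 2)"
    using assms ln_le_minus_one[of "r / p"] by (intro mult_left_mono divide_right_mono) auto
  also have "\<dots> = (r - p) / ln 2" using assms by (simp add: field_simps)
  finally show ?thesis .
qed

lemma cond_entropy_Gibbs:
  fixes D :: "('w \<times> 'z) pmf" and q :: "'w \<times> 'z \<Rightarrow> real"
  assumes fin_D: "finite (set_pmf D)" and fin_U: "finite U" and range_U: "fst ` set_pmf D \<subseteq> U"
    and q_pos: "\<And>t. t \<in> set_pmf D \<Longrightarrow> q t > 0" and q_nonneg: "\<And>t. q t \<ge> 0"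
    and q_sum: "\<And>z. (\<Sum>w\<in>U. q (w, z)) \<le> 1"
  shows "cond_entropy D \<le> (\<Sum>t\<in>set_pmf D. pmf D t * - log 2 (q t))"
proof -
  define S where "S = set_pmf D"
  define pZ where "pZ = pmf (map_pmf snd D)"
  define Zs where "Zs = snd ` S"
  have fin_S: "finite S" "finite Zs" using fin_D by (simp_all add: S_def Zs_def)
  have pointwise: "pmf D t * - log 2 (pmf D t / pZ (snd t)) - pmf D t * - log 2 (q t)
      \<le> (pZ (snd t) * q t - pmf D t) / ln 2" if t: "t \<in> S" for t
  proof -
    have pos: "pmf D t > 0" "pZ (snd t) > 0" "q t > 0"
      using t q_pos by (auto simp: S_def pZ_def pmf_positive)
    then have "pmf D t * - log 2 (pmf D t / pZ (snd t)) - pmf D t * - log 2 (q t)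
          = pmf D t * log 2 (pZ (snd t) * q t / pmf D t)"
      by (simp add: log_divide log_mult algebra_simps)
    also have "\<dots> \<le> (pZ (snd t) * q t - pmf D t) / ln 2"
      using pos by (intro log_ratio_le) auto
    finally show ?thesis .
  qed
  have "(\<Sum>t\<in>S. pZ (snd t) * q t) \<le> (\<Sum>t\<in>U \<times> Zs. pZ (snd t) * q t)"
    using range_U fin_U fin_S by (intro sum_mono2) (force simp: S_def Zs_def pZ_def q_nonneg)+
  also have "\<dots> = (\<Sum>w\<in>U. \<Sum>z\<in>Zs. pZ z * q (w, z))"
    by (simp add: sum.cartesian_product case_prod_beta)
  also have "\<dots> = (\<Sum>z\<in>Zs. pZ z * (\<Sum>w\<in>U. q (w, z)))"
    by (subst sum.swap) (simp add: sum_distrib_left)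
  also have "\<dots> \<le> (\<Sum>z\<in>Zs. pZ z)"
    by (rule sum_mono) (use q_sum in \<open>auto simp: pZ_def intro: mult_left_le\<close>)
  also have "\<dots> = 1" unfolding pZ_def Zs_def S_def by (rule sum_pmf_eq_1) (use fin_D in auto)
  finally have mass_q: "(\<Sum>t\<in>S. pZ (snd t) * q t) \<le> 1" .
  have mass_D: "(\<Sum>t\<in>S. pmf D t) = 1" unfolding S_def by (rule sum_pmf_eq_1) (use fin_D in auto)
  have "cond_entropy D - (\<Sum>t\<in>S. pmf D t * - log 2 (q t))
      = (\<Sum>t\<in>S. pmf D t * - log 2 (pmf D t / pZ (snd t)) - pmf D t * - log 2 (q t))"
    unfolding cond_entropy_sum[OF fin_D] S_def pZ_def by (simp add: sum_subtractf sum_negf)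
  also have "\<dots> \<le> (\<Sum>t\<in>S. (pZ (snd t) * q t - pmf D t) / ln 2)"
    by (rule sum_mono) (rule pointwise)
  also have "\<dots> = ((\<Sum>t\<in>S. pZ (snd t) * q t) - (\<Sum>t\<in>S. pmf D t)) / ln 2"
    by (simp add: sum_divide_distrib[symmetric] sum_subtractf)
  also have "\<dots> \<le> 0" using mass_q mass_D by (simp add: divide_nonpos_pos)
  finally show ?thesis unfolding S_def by simp
qed

lemma h2_nonneg:
  assumes "0 < e" "e < 1"
  shows "0 \<le> h2 e"
proof -
  have "e * log 2 e \<le> 0" "(1 - e) * log 2 (1 - e) \<le> 0"
    using assms by (auto intro: mult_nonneg_nonpos)
  then show ?thesis unfolding h2_def by linarith
qed

(* The weights of Fano's guess: mass 1 - eps on the guessed message, the remaining eps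
   spread evenly over the other |U| - 1 messages.  They are sub-stochastic on U. *)
lemma fano_weights_sum:
  fixes \<epsilon> :: real
  assumes "finite U" "card U \<ge> 2" "0 \<le> \<epsilon>" "\<epsilon> \<le> 1/2"
  shows "(\<Sum>w\<in>U. if w = u then 1 - \<epsilon> else \<epsilon> / (real (card U) - 1)) \<le> 1"
proof -
  define c where "c = \<epsilon> / (real (card U) - 1)"
  have c: "(real (card U) - 1) * c = \<epsilon>" "0 \<le> c"
    using assms by (auto simp: c_def)
  have "(\<Sum>w\<in>U. if w = u then 1 - \<epsilon> else c) = (\<Sum>w\<in>U. c + (if w = u then 1 - \<epsilon> - c else 0))"
    by (rule sum.cong) auto
  also have "\<dots> = card U * c + (if u \<in> U then 1 - \<epsilon> - c else 0)"
    using assms(1) by (simp add: sum.distrib sum.delta')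
  also have "\<dots> \<le> 1"
  proof (cases "u \<in> U")
    case True then show ?thesis using c by (simp add: algebra_simps)
  next
    case False
    have "real (card U) * \<epsilon> \<le> real (card U) * (1/2)"
      using assms by (intro mult_left_mono) auto
    then have "real (card U) * \<epsilon> \<le> real (card U) - 1"
      using assms by linarith
    then have "real (card U) * c \<le> 1" using assms by (simp add: c_def field_simps)
    then show ?thesis using False by simp
  qed
  finally show ?thesis unfolding c_def .
qed

(* Fano's inequality for at least two messages: Gibbs' inequality with the weights above
   gives H(W | Z) <= -log(1 - eps) + P(error) log((1 - eps) / c), c = eps / (|U| - 1). *)
lemma cond_entropy_Fano_two:
  fixes D :: "('w \<times> 'z) pmf" and guess :: "'z \<Rightarrow> 'w"
  assumes fin_D: "finite (set_pmf D)" and fin_U: "finite U" and range_U: "fst ` set_pmf D \<subseteq> U"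
    and two: "card U \<ge> 2"
    and err: "measure_pmf.prob D {t. guess (snd t) \<noteq> fst t} \<le> \<epsilon>"
    and eps: "0 < \<epsilon>" "\<epsilon> \<le> 1/2"
  shows "cond_entropy D \<le> h2 \<epsilon> + \<epsilon> * log 2 (card U)"
proof -
  define c where "c = \<epsilon> / (real (card U) - 1)"
  define q where "q t = (if fst t = guess (snd t) then 1 - \<epsilon> else c)" for t
  define K where "K = log 2 (1 - \<epsilon>) - log 2 c"
  have "c \<le> \<epsilon> / 1"
    unfolding c_def using two eps by (intro divide_left_mono) auto
  then have c: "0 < c" "c \<le> 1 - \<epsilon>" using two eps by (auto simp: c_def)
  have K: "K \<ge> 0" using c unfolding K_def by simp
  have log_q: "- log 2 (q t) = - log 2 (1 - \<epsilon>) + (if guess (snd t) \<noteq> fst t then K else 0)" for t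
    by (auto simp: q_def K_def)
  have "cond_entropy D \<le> (\<Sum>t\<in>set_pmf D. pmf D t * - log 2 (q t))"
  proof (rule cond_entropy_Gibbs[OF fin_D fin_U range_U])
    show "q t > 0" "q t \<ge> 0" for t using c eps by (auto simp: q_def)
    have "(\<Sum>w\<in>U. q (w, z)) = (\<Sum>w\<in>U. if w = guess z then 1 - \<epsilon> else \<epsilon> / (real (card U) - 1))"
      for z by (rule sum.cong) (auto simp: q_def c_def)
    then show "(\<Sum>w\<in>U. q (w, z)) \<le> 1" for z
      using fano_weights_sum[OF fin_U two, of \<epsilon> "guess z"] eps by simp
  qed
  also have "\<dots> = (\<Sum>t\<in>set_pmf D. pmf D t * - log 2 (1 - \<epsilon>)
                                + K * (if guess (snd t) \<noteq> fst t then pmf D t else 0))"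
    by (rule sum.cong) (auto simp: log_q algebra_simps)
  also have "\<dots> = - log 2 (1 - \<epsilon>) * (\<Sum>t\<in>set_pmf D. pmf D t)
                   + K * measure_pmf.prob D {t. guess (snd t) \<noteq> fst t}"
    by (simp add: sum.distrib sum_distrib_left sum_distrib_right measure_pmf_prob_as_sum[OF fin_D]
                  mult.commute sum_subtractf)
  also have "\<dots> \<le> - log 2 (1 - \<epsilon>) + K * \<epsilon>"
    using K err sum_pmf_eq_1[OF fin_D subset_refl] by (simp add: mult_left_mono)
  also have "\<dots> = h2 \<epsilon> + \<epsilon> * log 2 (real (card U) - 1)"
    using eps two unfolding K_def c_def h2_def by (simp add: log_divide algebra_simps)
  also have "\<dots> \<le> h2 \<epsilon> + \<epsilon> * log 2 (card U)"
    using eps two by (auto intro!: mult_left_mono)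
  finally show ?thesis .
qed

(* For a single
   message W is determined and Gibbs' inequality with q = 1 gives H(W | Z) <= 0. *)
lemma cond_entropy_Fano:
  fixes D :: "('w \<times> 'z) pmf" and guess :: "'z \<Rightarrow> 'w"
  assumes fin_D: "finite (set_pmf D)" and fin_U: "finite U" and range_U: "fst ` set_pmf D \<subseteq> U"
    and err: "measure_pmf.prob D {t. guess (snd t) \<noteq> fst t} \<le> \<epsilon>"
    and eps: "0 < \<epsilon>" "\<epsilon> \<le> 1/2"
  shows "cond_entropy D \<le> h2 \<epsilon> + \<epsilon> * log 2 (card U)"
proof -
  have "U \<noteq> {}" using range_U set_pmf_not_empty[of D] by auto
  then have "card U \<ge> 1" using fin_U by (simp add: Suc_le_eq card_gt_0_iff)
  then consider "card U = 1" | "card U \<ge> 2" by linarith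
  then show ?thesis
  proof cases
    case 1
    have "cond_entropy D \<le> (\<Sum>t\<in>set_pmf D. pmf D t * - log 2 ((\<lambda>_. 1) t))"
      by (rule cond_entropy_Gibbs[OF fin_D fin_U range_U]) (use 1 in auto)
    moreover have "0 \<le> h2 \<epsilon>" using eps by (intro h2_nonneg) auto
    ultimately show ?thesis using 1 by simp
  next
    case 2
    then show ?thesis by (rule cond_entropy_Fano_two[OF fin_D fin_U range_U _ err eps])
  qed
qed

section \<open>Conditional mutual information as a difference of entropies\<close>

lemma distributed_pmf:
  assumes "range X \<subseteq> A"
  shows "distributed (measure_pmf P) (count_space A) X (\<lambda>x. ennreal (pmf (map_pmf X P) x))"
  unfolding distributed_def
proof (intro conjI)
  show "distr (measure_pmf P) (count_space A) X
          = density (count_space A) (\<lambda>x. ennreal (pmf (map_pmf X P) x))"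
  proof (rule measure_eqI)
    fix S assume "S \<in> sets (distr (measure_pmf P) (count_space A) X)"
    then have S: "S \<subseteq> A" by simp
    have "emeasure (distr (measure_pmf P) (count_space A) X) S = emeasure (map_pmf X P) S"
      using S assms by (subst emeasure_distr) auto
    also have "\<dots> = (\<integral>\<^sup>+x. ennreal (pmf (map_pmf X P) x) * indicator S x \<partial>count_space UNIV)"
      by (subst measure_pmf_eq_density) (simp add: emeasure_density)
    also have "\<dots> = emeasure (density (count_space A) (\<lambda>x. ennreal (pmf (map_pmf X P) x))) S"
      using S by (simp add: emeasure_density nn_integral_count_space_indicator mult.assoc)
                 (intro nn_integral_cong, auto split: split_indicator)
    finally show "emeasure (distr (measure_pmf P) (count_space A) X) S
        = emeasure (density (count_space A) (\<lambda>x. ennreal (pmf (map_pmf X P) x))) S" .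
  qed simp
qed (use assms in auto)

lemma integrable_count_space_finite_support:
  fixes f :: "'a \<Rightarrow> real"
  assumes "finite F" "\<And>x. x \<notin> F \<Longrightarrow> f x = 0"
  shows "integrable (count_space A) f"
proof -
  have "(\<integral>\<^sup>+x. ennreal (norm (f x)) \<partial>count_space A) = (\<Sum>x\<in>F \<inter> A. ennreal (norm (f x)))"
    using assms by (intro nn_integral_count_space') auto
  then show ?thesis by (simp add: integrable_iff_bounded)
qed

lemma integral_count_space_finite_support:
  fixes f :: "'a \<Rightarrow> real"
  assumes "finite F" "F \<subseteq> A" "\<And>x. x \<notin> F \<Longrightarrow> f x = 0"
  shows "integral\<^sup>L (count_space A) f = sum f F"
proof -
  have "finite {a \<in> A. f a \<noteq> 0}" using assms by (auto intro: finite_subset)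
  then show ?thesis
    using assms by (simp add: lebesgue_integral_count_space_finite_support)
                   (intro sum.mono_neutral_cong_left, auto)
qed

lemma information_space_pmf: "information_space (measure_pmf P) 2"
  by (intro information_space.intro measure_pmf.prob_space_axioms)
     (simp add: information_space_axioms_def)

lemma finite_entropy_pmf:
  assumes "range X \<subseteq> A" "finite (X ` set_pmf P)"
  shows "information_space.finite_entropy (measure_pmf P) 2 (count_space A) X (pmf (map_pmf X P))"
proof -
  interpret information_space "measure_pmf P" 2 by (rule information_space_pmf)
  show ?thesis unfolding finite_entropy_def
  proof (intro conjI ballI)
    show "distributed (measure_pmf P) (count_space A) X (\<lambda>x. ennreal (pmf (map_pmf X P) x))"
      by (rule distributed_pmf[OF assms(1)])
    show "integrable (count_space A) (\<lambda>x. pmf (map_pmf X P) x * log 2 (pmf (map_pmf X P) x))"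
      by (rule integrable_count_space_finite_support[OF assms(2)]) (simp add: pmf_eq_0_set_pmf)
  qed simp
qed

lemma cmi_sum:
  fixes P :: "'a pmf" and X :: "'a \<Rightarrow> 'x" and Y :: "'a \<Rightarrow> 'y" and Z :: "'a \<Rightarrow> 'z"
  defines "V \<equiv> \<lambda>\<omega>. (X \<omega>, Y \<omega>, Z \<omega>)"
  assumes cX: "countable (range X)" and cY: "countable (range Y)" and cZ: "countable (range Z)"
    and fin_V: "finite (V ` set_pmf P)"
  shows "cmi P X Y Z = (\<Sum>(x, y, z) \<in> V ` set_pmf P. pmf (map_pmf V P) (x, y, z) *
     log 2 (pmf (map_pmf V P) (x, y, z) / (pmf (map_pmf (\<lambda>\<omega>. (X \<omega>, Z \<omega>)) P) (x, z) *
       (pmf (map_pmf (\<lambda>\<omega>. (Y \<omega>, Z \<omega>)) P) (y, z) / pmf (map_pmf Z P) z))))"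
proof -
  interpret information_space "measure_pmf P" 2 by (rule information_space_pmf)
  let ?S = "count_space (range X)" and ?T = "count_space (range Y)" and ?U = "count_space (range Z)"
  have fin: "finite ((\<lambda>\<omega>. k (V \<omega>)) ` set_pmf P)" for k :: "'x \<times> 'y \<times> 'z \<Rightarrow> 'b"
    using finite_imageI[OF fin_V, of k] by (simp add: image_image)
  have TU: "?T \<Otimes>\<^sub>M ?U = count_space (range Y \<times> range Z)"
    using cY cZ by (rule pair_measure_countable)
  have SU: "?S \<Otimes>\<^sub>M ?U = count_space (range X \<times> range Z)"
    using cX cZ by (rule pair_measure_countable)
  have STU: "?S \<Otimes>\<^sub>M ?T \<Otimes>\<^sub>M ?U = count_space (range X \<times> range Y \<times> range Z)"
    using cX cY cZ by (simp add: TU pair_measure_countable)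
  have "finite_entropy ?S X (pmf (map_pmf X P))"
    by (rule finite_entropy_pmf) (use fin[of fst] in \<open>auto simp: V_def\<close>)
  moreover have "finite_entropy ?U Z (pmf (map_pmf Z P))"
    by (rule finite_entropy_pmf) (use fin[of "\<lambda>v. snd (snd v)"] in \<open>auto simp: V_def\<close>)
  moreover have "finite_entropy (?T \<Otimes>\<^sub>M ?U) (\<lambda>\<omega>. (Y \<omega>, Z \<omega>)) (pmf (map_pmf (\<lambda>\<omega>. (Y \<omega>, Z \<omega>)) P))"
    unfolding TU by (rule finite_entropy_pmf) (use fin[of snd] in \<open>auto simp: V_def\<close>)
  moreover have "finite_entropy (?S \<Otimes>\<^sub>M ?U) (\<lambda>\<omega>. (X \<omega>, Z \<omega>)) (pmf (map_pmf (\<lambda>\<omega>. (X \<omega>, Z \<omega>)) P))"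
    unfolding SU by (rule finite_entropy_pmf) (use fin[of "\<lambda>v. (fst v, snd (snd v))"] in \<open>auto simp: V_def\<close>)
  moreover have "finite_entropy (?S \<Otimes>\<^sub>M ?T \<Otimes>\<^sub>M ?U) V (pmf (map_pmf V P))"
    unfolding STU by (rule finite_entropy_pmf) (use fin_V in \<open>auto simp: V_def\<close>)
  ultimately have eq: "cmi P X Y Z = (LINT (x, y, z)|count_space (range X \<times> range Y \<times> range Z).
      pmf (map_pmf V P) (x, y, z) * log 2 (pmf (map_pmf V P) (x, y, z) /
        (pmf (map_pmf (\<lambda>\<omega>. (X \<omega>, Z \<omega>)) P) (x, z) *
         (pmf (map_pmf (\<lambda>\<omega>. (Y \<omega>, Z \<omega>)) P) (y, z) / pmf (map_pmf Z P) z))))"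
    unfolding cmi_def space_measure_pmf V_def STU[symmetric]
    by (intro conditional_mutual_information_generic_eq' sigma_finite_measure_count_space_countable cX cY cZ)
  show ?thesis
    unfolding eq
  proof (rule integral_count_space_finite_support[OF fin_V])
    show "V ` set_pmf P \<subseteq> range X \<times> range Y \<times> range Z" by (auto simp: V_def)
  qed (auto simp: pmf_eq_0_set_pmf)
qed

lemma cmi_entropy_sums:
  fixes P :: "'a pmf" and X :: "'a \<Rightarrow> 'x" and Y :: "'a \<Rightarrow> 'y" and Z :: "'a \<Rightarrow> 'z"
  defines "D \<equiv> map_pmf (\<lambda>\<omega>. (X \<omega>, Y \<omega>, Z \<omega>)) P"
  assumes cX: "countable (range X)" and cY: "countable (range Y)" and cZ: "countable (range Z)"
    and fin: "finite ((\<lambda>\<omega>. (X \<omega>, Y \<omega>, Z \<omega>)) ` set_pmf P)"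
  shows "cmi P X Y Z = (\<Sum>(x, y, z)\<in>set_pmf D.
           pmf D (x, y, z) * - log 2 (pmf (map_pmf (\<lambda>\<omega>. (Y \<omega>, Z \<omega>)) P) (y, z) / pmf (map_pmf Z P) z)
         - pmf D (x, y, z) * - log 2 (pmf D (x, y, z) / pmf (map_pmf (\<lambda>\<omega>. (X \<omega>, Z \<omega>)) P) (x, z)))"
proof -
  let ?pXZ = "pmf (map_pmf (\<lambda>\<omega>. (X \<omega>, Z \<omega>)) P)"
  let ?pYZ = "pmf (map_pmf (\<lambda>\<omega>. (Y \<omega>, Z \<omega>)) P)"
  let ?pZ = "pmf (map_pmf Z P)"
  have "cmi P X Y Z = (\<Sum>(x, y, z)\<in>set_pmf D. pmf D (x, y, z) *
           log 2 (pmf D (x, y, z) / (?pXZ (x, z) * (?pYZ (y, z) / ?pZ z))))"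
    using cmi_sum[OF cX cY cZ fin] by (simp add: D_def)
  also have "\<dots> = (\<Sum>(x, y, z)\<in>set_pmf D. pmf D (x, y, z) * - log 2 (?pYZ (y, z) / ?pZ z)
                   - pmf D (x, y, z) * - log 2 (pmf D (x, y, z) / ?pXZ (x, z)))"
  proof (rule sum.cong[OF refl], clarify)
    fix x y z assume "(x, y, z) \<in> set_pmf D"
    then obtain \<omega> where \<omega>: "\<omega> \<in> set_pmf P" "X \<omega> = x" "Y \<omega> = y" "Z \<omega> = z"
      unfolding D_def by auto
    have "pmf D (x, y, z) > 0" "?pXZ (x, z) > 0" "?pYZ (y, z) > 0" "?pZ z > 0"
      using \<omega> by (auto simp: D_def pmf_positive)
    then show "pmf D (x, y, z) * log 2 (pmf D (x, y, z) / (?pXZ (x, z) * (?pYZ (y, z) / ?pZ z)))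
        = pmf D (x, y, z) * - log 2 (?pYZ (y, z) / ?pZ z)
          - pmf D (x, y, z) * - log 2 (pmf D (x, y, z) / ?pXZ (x, z))"
      by (simp add: log_divide log_mult algebra_simps)
  qed
  finally show ?thesis .
qed

lemma cmi_cond_entropy:
  fixes P :: "'a pmf" and X :: "'a \<Rightarrow> 'x" and Y :: "'a \<Rightarrow> 'y" and Z :: "'a \<Rightarrow> 'z"
  assumes cX: "countable (range X)" and cY: "countable (range Y)" and cZ: "countable (range Z)"
    and fin: "finite ((\<lambda>\<omega>. (X \<omega>, Y \<omega>, Z \<omega>)) ` set_pmf P)"
  shows "cmi P X Y Z = cond_entropy_rv P Y Z - cond_entropy_rv P Y (\<lambda>\<omega>. (X \<omega>, Z \<omega>))"
proof -
  define D where "D = map_pmf (\<lambda>\<omega>. (X \<omega>, Y \<omega>, Z \<omega>)) P"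
  have fin_D: "finite (set_pmf D)" using fin by (simp add: D_def)
  have H_YZ: "cond_entropy_rv P Y Z = (\<Sum>(x, y, z)\<in>set_pmf D.
      pmf D (x, y, z) * - log 2 (pmf (map_pmf (\<lambda>\<omega>. (Y \<omega>, Z \<omega>)) P) (y, z) / pmf (map_pmf Z P) z))"
  proof -
    have "map_pmf (\<lambda>\<omega>. (Y \<omega>, Z \<omega>)) P = map_pmf (\<lambda>(x, y, z). (y, z)) D"
      by (simp add: D_def map_pmf_comp)
    then show ?thesis
      using cond_entropy_map_sum[OF fin_D, of "\<lambda>(x, y, z). (y, z)"]
      by (simp add: cond_entropy_rv_def case_prod_beta D_def map_pmf_comp)
  qed
  have H_YXZ: "cond_entropy_rv P Y (\<lambda>\<omega>. (X \<omega>, Z \<omega>)) = (\<Sum>(x, y, z)\<in>set_pmf D.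
      pmf D (x, y, z) * - log 2 (pmf D (x, y, z) / pmf (map_pmf (\<lambda>\<omega>. (X \<omega>, Z \<omega>)) P) (x, z)))"
  proof -
    have inj: "inj (\<lambda>(x, y, z). (y, (x, z)))" by (auto simp: inj_def)
    have "map_pmf (\<lambda>\<omega>. (Y \<omega>, (X \<omega>, Z \<omega>))) P = map_pmf (\<lambda>(x, y, z). (y, (x, z))) D"
      by (simp add: D_def map_pmf_comp)
    then show ?thesis
      using cond_entropy_map_sum[OF fin_D, of "\<lambda>(x, y, z). (y, (x, z))"]
      by (simp add: cond_entropy_rv_def case_prod_beta
                    pmf_map_inj'[OF inj, of _ "(fst _, fst (snd _), snd (snd _))", simplified])
         (simp add: D_def map_pmf_comp)
  qed
  show ?thesis
    unfolding H_YZ H_YXZ cmi_entropy_sums[OF cX cY cZ fin, folded D_def]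
    by (simp add: sum_subtractf sum_negf case_prod_beta)
qed

section \<open>The channel model\<close>

lemma UNIV_chstate: "(UNIV :: chstate set) = {B, C, BC, Empt}"
  using chstate.exhaust by auto

lemma finite_vecs: "finite (vecs k :: 'f::finite list set)"
  using finite_lists_length_eq[of "UNIV :: 'f set" k] by (simp add: vecs_def)

lemma card_vecs: "card (vecs k :: 'f::finite list set) = CARD('f) ^ k"
  using card_lists_length_eq[of "UNIV :: 'f set" k] by (simp add: vecs_def)

lemma vecs_nonempty: "vecs k \<noteq> {}"
  unfolding vecs_def by (auto intro: exI[of _ "replicate k undefined"])

lemma map_fst_joint_pmf:
  "map_pmf fst (joint_pmf L N1 N2 \<Theta> n d1 d2 :: ('f::{finite,field} list \<times> _) pmf)
     = pmf_of_set (vecs (L * N1))"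
  unfolding joint_pmf_def by (simp add: map_fst_pair_pmf)

lemma fst_joint_pmf_in_vecs:
  "\<omega> \<in> set_pmf (joint_pmf L N1 N2 \<Theta> n d1 d2 :: ('f::{finite,field} list \<times> _) pmf)
     \<Longrightarrow> fst \<omega> \<in> vecs (L * N1)"
proof -
  assume "\<omega> \<in> set_pmf (joint_pmf L N1 N2 \<Theta> n d1 d2)"
  then have "fst \<omega> \<in> set_pmf (map_pmf fst (joint_pmf L N1 N2 \<Theta> n d1 d2 :: ('f list \<times> _) pmf))"
    by simp
  then show ?thesis by (simp add: map_fst_joint_pmf finite_vecs vecs_nonempty)
qed

lemma finite_set_state_pmf: "finite (set_pmf (state_pmf d1 d2))"
  by (rule finite_subset[OF subset_UNIV]) (simp add: UNIV_chstate)

lemma prob_bob_rx: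
  assumes "0 \<le> d1" "d1 \<le> 1"
  shows "measure_pmf.prob (state_pmf d1 d2) {s. bob_rx s} = 1 - d1"
    and "measure_pmf.prob (state_pmf d1 d2) {s. \<not> bob_rx s} = d1"
proof -
  have "map_pmf bob_rx (state_pmf d1 d2)
          = map_pmf fst (pair_pmf (bernoulli_pmf (1 - d1)) (bernoulli_pmf (1 - d2)))"
    unfolding state_pmf_def map_pmf_comp by (rule map_pmf_cong) (auto simp: bob_rx_def split: if_splits)
  then have bob: "map_pmf bob_rx (state_pmf d1 d2) = bernoulli_pmf (1 - d1)"
    by (simp add: map_fst_pair_pmf)
  have "measure_pmf.prob (state_pmf d1 d2) {s. bob_rx s = b} = pmf (bernoulli_pmf (1 - d1)) b" for b
    by (simp flip: bob measure_pmf_single add: vimage_def)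
  from this[of True] this[of False] assms show
    "measure_pmf.prob (state_pmf d1 d2) {s. bob_rx s} = 1 - d1"
    "measure_pmf.prob (state_pmf d1 d2) {s. \<not> bob_rx s} = d1" by simp_all
qed

definition bob_view :: "(nat \<Rightarrow> 'f list \<Rightarrow> 'f list \<Rightarrow> 'r \<Rightarrow> chstate list \<Rightarrow> 'f list) \<Rightarrow> nat
    \<Rightarrow> ('f list \<times> 'f list \<times> 'r \<times> (nat \<Rightarrow> chstate)) \<Rightarrow> 'f list option list \<times> chstate list" where
  "bob_view f i \<omega> = (Y1past f i \<omega>, Spast i (snd (snd (snd \<omega>))))"

definition resample :: "nat \<Rightarrow> chstate \<Rightarrow> 'w1 \<times> 'w2 \<times> 'r \<times> (nat \<Rightarrow> chstate)
    \<Rightarrow> 'w1 \<times> 'w2 \<times> 'r \<times> (nat \<Rightarrow> chstate)" where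
  "resample i y = (\<lambda>(w1, w2, \<theta>, s). (w1, w2, \<theta>, s(i := y)))"

(* The state S_i can be drawn last, independently of everything else: the joint
   distribution is the image of (state, rest) under resample i. *)
lemma joint_pmf_resample:
  assumes i: "i \<in> {1..n}"
  shows "\<exists>R. joint_pmf L N1 N2 \<Theta> n d1 d2
               = map_pmf (\<lambda>(y, \<omega>). resample i y \<omega>) (pair_pmf (state_pmf d1 d2) R)"
proof -
  define Rest where "Rest = Pi_pmf ({1..n} - {i}) Empt (\<lambda>_. state_pmf d1 d2)"
  have "{1..n} = insert i ({1..n} - {i})" using i by auto
  then have states: "states_pmf n d1 d2 = map_pmf (\<lambda>(y, s). s(i := y)) (pair_pmf (state_pmf d1 d2) Rest)"
    unfolding states_pmf_def Rest_def by (metis Pi_pmf_insert finite_Diff finite_atLeastAtMost Diff_iff singletonI)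
  \<comment> \<open>move the draw of \<open>S\<^sub>i\<close> in front of the independent draws of \<open>W\<^sub>1, W\<^sub>2, \<Theta>\<^sub>A\<close>\<close>
  have "joint_pmf L N1 N2 \<Theta> n d1 d2 = map_pmf (\<lambda>(y, \<omega>). resample i y \<omega>) (pair_pmf (state_pmf d1 d2)
          (pair_pmf (pmf_of_set (vecs (L * N1))) (pair_pmf (pmf_of_set (vecs (L * N2))) (pair_pmf \<Theta> Rest))))"
    unfolding joint_pmf_def states resample_def pair_pmf_def map_pmf_def bind_assoc_pmf bind_return_pmf
    apply (rule sym)
    apply (subst bind_commute_pmf[of "state_pmf d1 d2" "pmf_of_set (vecs (L * N1))"])
    apply (rule bind_pmf_cong[OF refl])
    apply (subst bind_commute_pmf[of "state_pmf d1 d2" "pmf_of_set (vecs (L * N2))"])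
    apply (rule bind_pmf_cong[OF refl])
    apply (subst bind_commute_pmf[of "state_pmf d1 d2" "\<Theta>"])
    apply (simp add: bind_return_pmf bind_assoc_pmf)
    done
  then show ?thesis by blast
qed

lemma Spast_update: "j \<le> i \<Longrightarrow> Spast j (s(i := y)) = Spast j s"
  unfolding Spast_def by auto

lemma Xin_resample: "j \<le> i \<Longrightarrow> Xin f j (resample i y \<omega>) = Xin f j \<omega>"
  unfolding Xin_def resample_def by (cases \<omega>) (auto simp: Spast_update)

lemma Y1_resample: "j < i \<Longrightarrow> Y1 f j (resample i y \<omega>) = Y1 f j \<omega>"
  unfolding Y1_def using Xin_resample[of j i f y \<omega>] by (cases \<omega>) (auto simp: resample_def)

lemma Y1_resample_same: "Y1 f i (resample i y \<omega>) = (if bob_rx y then Some (Xin f i \<omega>) else None)"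
  unfolding Y1_def using Xin_resample[of i i f y \<omega>] by (cases \<omega>) (auto simp: resample_def)

lemma Y1past_resample: "j \<le> i \<Longrightarrow> Y1past f j (resample i y \<omega>) = Y1past f j \<omega>"
  unfolding Y1past_def by (intro map_cong refl Y1_resample) auto

lemma bob_view_resample: "bob_view f i (resample i y \<omega>) = bob_view f i \<omega>"
  unfolding bob_view_def using Y1past_resample[of i i f y \<omega>]
  by (cases \<omega>) (auto simp: resample_def Spast_update)

lemma bob_view_Suc:
  "1 \<le> i \<Longrightarrow> bob_view f (Suc i) \<omega>
     = (fst (bob_view f i \<omega>) @ [Y1 f i \<omega>], snd (bob_view f i \<omega>) @ [snd (snd (snd \<omega>)) i])"
  unfolding bob_view_def Y1past_def Spast_def by (simp add: upt_Suc_append)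

(* The law of (W1, view before slot i+1) is obtained from the law E of
   (W1, view before slot i, X_i) by attaching an independent state that erases or reveals
   X_i, followed by an injective relabelling of the condition. *)
lemma bob_view_step:
  fixes f :: "nat \<Rightarrow> 'f::{finite,field} list \<Rightarrow> 'f list \<Rightarrow> 'r \<Rightarrow> chstate list \<Rightarrow> 'f list"
    and L N1 N2 n :: nat and \<Theta> :: "'r pmf" and d1 d2 :: real
  defines "P \<equiv> joint_pmf L N1 N2 \<Theta> n d1 d2"
  assumes i: "i \<in> {1..n}"
  shows "map_pmf (\<lambda>\<omega>. (fst \<omega>, bob_view f (Suc i) \<omega>)) P =
    map_pmf (\<lambda>(w, c). (w, (\<lambda>(y, z, yo). (fst z @ [yo], snd z @ [y])) c))
      (map_pmf (\<lambda>(y, (w, z, x)). (w, (y, z, if bob_rx y then Some x else None)))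
        (pair_pmf (state_pmf d1 d2) (map_pmf (\<lambda>\<omega>. (fst \<omega>, bob_view f i \<omega>, Xin f i \<omega>)) P)))"
proof -
  obtain R where P: "P = map_pmf (\<lambda>(y, \<omega>). resample i y \<omega>) (pair_pmf (state_pmf d1 d2) R)"
    using joint_pmf_resample[OF i] unfolding P_def by blast
  have fst_resample: "fst (resample i y \<omega>) = fst \<omega>" for y and \<omega> :: "'f list \<times> 'f list \<times> 'r \<times> (nat \<Rightarrow> chstate)"
    by (cases \<omega>) (simp add: resample_def)
  have state_resample: "snd (snd (snd (resample i y \<omega>))) i = y" for y and \<omega> :: "'f list \<times> 'f list \<times> 'r \<times> (nat \<Rightarrow> chstate)"
    by (cases \<omega>) (simp add: resample_def)
  have past: "map_pmf (\<lambda>\<omega>. (fst \<omega>, bob_view f i \<omega>, Xin f i \<omega>)) P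
            = map_pmf (\<lambda>\<omega>. (fst \<omega>, bob_view f i \<omega>, Xin f i \<omega>)) R"
  proof -
    have "map_pmf (\<lambda>\<omega>. (fst \<omega>, bob_view f i \<omega>, Xin f i \<omega>)) P
        = map_pmf (\<lambda>\<omega>. (fst \<omega>, bob_view f i \<omega>, Xin f i \<omega>)) (map_pmf snd (pair_pmf (state_pmf d1 d2) R))"
      unfolding P map_pmf_comp
      by (intro map_pmf_cong refl) (auto simp: fst_resample bob_view_resample Xin_resample)
    then show ?thesis by (simp add: map_snd_pair_pmf)
  qed
  show ?thesis
    unfolding past pair_map_pmf2 map_pmf_comp unfolding P map_pmf_comp
    using i by (intro map_pmf_cong refl)
      (auto simp: fst_resample bob_view_Suc bob_view_resample Y1_resample_same state_resample)
qed

lemma range_Xin: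
  assumes "\<And>i w1 w2 \<theta> ss. length (f i w1 w2 \<theta> ss) = L"
  shows "range (Xin f i) \<subseteq> vecs L"
  using assms by (auto simp: Xin_def vecs_def split: prod.splits)

lemma finite_range_bob_view:
  fixes f :: "nat \<Rightarrow> 'f::finite list \<Rightarrow> 'f list \<Rightarrow> 'r \<Rightarrow> chstate list \<Rightarrow> 'f list"
  assumes f_len: "\<And>i w1 w2 \<theta> ss. length (f i w1 w2 \<theta> ss) = L"
  shows "finite (range (bob_view f i))"
proof -
  define Ys where "Ys = {ys. set ys \<subseteq> insert None (Some ` (vecs L :: 'f list set)) \<and> length ys = i - 1}"
  define Ss where "Ss = {ss. set ss \<subseteq> (UNIV :: chstate set) \<and> length ss = i - 1}"
  have "finite Ys" unfolding Ys_def by (intro finite_lists_length_eq) (simp add: finite_vecs)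
  moreover have "finite Ss" unfolding Ss_def by (intro finite_lists_length_eq) (simp add: UNIV_chstate)
  moreover have "range (bob_view f i) \<subseteq> Ys \<times> Ss"
    using range_Xin[OF f_len]
    by (fastforce simp: bob_view_def Ys_def Ss_def Y1past_def Spast_def Y1_def)
  ultimately show ?thesis by (meson finite_SigmaI finite_subset)
qed

section \<open>Bob's uncertainty about the message\<close>

lemma cmi_input_view:
  fixes f :: "nat \<Rightarrow> 'f::{finite,field} list \<Rightarrow> 'f list \<Rightarrow> 'r \<Rightarrow> chstate list \<Rightarrow> 'f list"
    and L N1 N2 n :: nat and \<Theta> :: "'r pmf" and d1 d2 :: real
  defines "P \<equiv> joint_pmf L N1 N2 \<Theta> n d1 d2"
  assumes f_len: "\<And>i w1 w2 \<theta> ss. length (f i w1 w2 \<theta> ss) = L"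
  shows "cmi P (Xin f i) fst (bob_view f i)
           = cond_entropy_rv P fst (bob_view f i) - cond_entropy_rv P fst (\<lambda>\<omega>. (Xin f i \<omega>, bob_view f i \<omega>))"
proof (rule cmi_cond_entropy)
  have fin_X: "finite (range (Xin f i))"
    using range_Xin[OF f_len] finite_vecs by (rule finite_subset)
  then show "countable (range (Xin f i))" by (rule countable_finite)
  show "countable (range (fst :: 'f list \<times> 'f list \<times> 'r \<times> (nat \<Rightarrow> chstate) \<Rightarrow> 'f list))"
    by (rule countable_subset[OF subset_UNIV]) simp
  show "countable (range (bob_view f i))"
    using finite_range_bob_view[OF f_len] by (rule countable_finite)
  have "(\<lambda>\<omega>. (Xin f i \<omega>, fst \<omega>, bob_view f i \<omega>)) ` set_pmf P
          \<subseteq> range (Xin f i) \<times> vecs (L * N1) \<times> range (bob_view f i)"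
    using fst_joint_pmf_in_vecs unfolding P_def by blast
  then show "finite ((\<lambda>\<omega>. (Xin f i \<omega>, fst \<omega>, bob_view f i \<omega>)) ` set_pmf P)"
    by (rule finite_subset) (simp add: fin_X finite_vecs finite_range_bob_view[OF f_len])
qed

lemma entropy_view_step:
  fixes f :: "nat \<Rightarrow> 'f::{finite,field} list \<Rightarrow> 'f list \<Rightarrow> 'r \<Rightarrow> chstate list \<Rightarrow> 'f list"
    and L N1 N2 n :: nat and \<Theta> :: "'r pmf" and d1 d2 :: real
  defines "P \<equiv> joint_pmf L N1 N2 \<Theta> n d1 d2"
  assumes f_len: "\<And>i w1 w2 \<theta> ss. length (f i w1 w2 \<theta> ss) = L"
    and i: "i \<in> {1..n}" and d1: "0 \<le> d1" "d1 \<le> 1"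
  shows "cond_entropy_rv P fst (bob_view f (Suc i))
           = (1 - d1) * cond_entropy_rv P fst (\<lambda>\<omega>. (Xin f i \<omega>, bob_view f i \<omega>))
             + d1 * cond_entropy_rv P fst (bob_view f i)"
proof -
  define E where "E = map_pmf (\<lambda>\<omega>. (fst \<omega>, bob_view f i \<omega>, Xin f i \<omega>)) P"
  have "set_pmf E \<subseteq> vecs (L * N1) \<times> range (bob_view f i) \<times> vecs L"
    using fst_joint_pmf_in_vecs range_Xin[OF f_len] unfolding E_def P_def by fastforce
  then have fin_E: "finite (set_pmf E)"
    by (rule finite_subset) (simp add: finite_vecs finite_range_bob_view[OF f_len])
  have extend_inj: "inj (\<lambda>(y :: chstate, z :: 'f list option list \<times> chstate list, yo :: 'f list option).
                          (fst z @ [yo], snd z @ [y]))"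
    by (auto simp: inj_def prod_eq_iff)
  have "cond_entropy_rv P fst (bob_view f (Suc i))
      = cond_entropy (map_pmf (\<lambda>(y, (w, z, x)). (w, (y, z, if bob_rx y then Some x else None)))
                       (pair_pmf (state_pmf d1 d2) E))"
    unfolding cond_entropy_rv_def P_def E_def bob_view_step[OF i] by (rule cond_entropy_relabel[OF extend_inj])
  also have "\<dots> = measure_pmf.prob (state_pmf d1 d2) {s. bob_rx s} * cond_entropy (map_pmf (\<lambda>(w, z, x). (w, (x, z))) E)
                 + measure_pmf.prob (state_pmf d1 d2) {s. \<not> bob_rx s} * cond_entropy (map_pmf (\<lambda>(w, z, x). (w, z)) E)"
    by (rule cond_entropy_erasure[OF finite_set_state_pmf fin_E])
  also have "\<dots> = (1 - d1) * cond_entropy_rv P fst (\<lambda>\<omega>. (Xin f i \<omega>, bob_view f i \<omega>))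
                   + d1 * cond_entropy_rv P fst (bob_view f i)"
    using d1 by (simp add: prob_bob_rx E_def cond_entropy_rv_def map_pmf_comp)
  finally show ?thesis .
qed

lemma entropy_view_first:
  fixes f :: "nat \<Rightarrow> 'f::{finite,field} list \<Rightarrow> 'f list \<Rightarrow> 'r \<Rightarrow> chstate list \<Rightarrow> 'f list"
  shows "cond_entropy_rv (joint_pmf L N1 N2 \<Theta> n d1 d2) fst (bob_view f 1)
           = real (L * N1) * log 2 (real CARD('f))"
proof -
  have "map_pmf (\<lambda>\<omega>. (fst \<omega>, bob_view f 1 \<omega>)) (joint_pmf L N1 N2 \<Theta> n d1 d2)
      = map_pmf (\<lambda>w. (w, ([], []))) (map_pmf fst (joint_pmf L N1 N2 \<Theta> n d1 d2 :: ('f list \<times> _) pmf))"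
    by (simp add: map_pmf_comp bob_view_def Y1past_def Spast_def)
  also have "\<dots> = map_pmf (\<lambda>w. (w, ([], []))) (pmf_of_set (vecs (L * N1)))"
    by (simp add: map_fst_joint_pmf)
  finally show ?thesis
    unfolding cond_entropy_rv_def
    by (simp add: cond_entropy_uniform finite_vecs vecs_nonempty card_vecs log_nat_power)
qed

lemma entropy_view_last:
  fixes f :: "nat \<Rightarrow> 'f::{finite,field} list \<Rightarrow> 'f list \<Rightarrow> 'r \<Rightarrow> chstate list \<Rightarrow> 'f list"
    and L N1 N2 n :: nat and \<Theta> :: "'r pmf" and d1 d2 :: real
    and \<phi>1 :: "'f list option list \<Rightarrow> 'f list"
  defines "P \<equiv> joint_pmf L N1 N2 \<Theta> n d1 d2"
  assumes f_len: "\<And>i w1 w2 \<theta> ss. length (f i w1 w2 \<theta> ss) = L"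
    and err: "measure_pmf.prob P {\<omega>. \<phi>1 (Y1past f (n + 1) \<omega>) \<noteq> fst \<omega>} \<le> \<epsilon>"
    and eps: "0 < \<epsilon>" "\<epsilon> \<le> 1/2"
  shows "cond_entropy_rv P fst (bob_view f (Suc n))
           \<le> h2 \<epsilon> + \<epsilon> * (real (L * N1) * log 2 (real CARD('f)))"
proof -
  define D where "D = map_pmf (\<lambda>\<omega>. (fst \<omega>, bob_view f (Suc n) \<omega>)) P"
  have "set_pmf D \<subseteq> vecs (L * N1) \<times> range (bob_view f (Suc n))"
    using fst_joint_pmf_in_vecs unfolding D_def P_def by fastforce
  then have fin_D: "finite (set_pmf D)"
    by (rule finite_subset) (simp add: finite_vecs finite_range_bob_view[OF f_len])
  have range_D: "fst ` set_pmf D \<subseteq> vecs (L * N1)"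
    using fst_joint_pmf_in_vecs unfolding D_def P_def by auto
  have "measure_pmf.prob D {t. \<phi>1 (fst (snd t)) \<noteq> fst t}
      = measure_pmf.prob P {\<omega>. \<phi>1 (Y1past f (n + 1) \<omega>) \<noteq> fst \<omega>}"
    unfolding D_def by (simp add: bob_view_def vimage_def)
  then have "cond_entropy D \<le> h2 \<epsilon> + \<epsilon> * log 2 (card (vecs (L * N1) :: 'f list set))"
    using err by (intro cond_entropy_Fano[OF fin_D finite_vecs range_D _ eps, of "\<lambda>z. \<phi>1 (fst z)"]) simp
  then show ?thesis
    unfolding cond_entropy_rv_def D_def by (simp add: card_vecs log_nat_power)
qed

lemma cmi_input_view_telescoping:
  fixes f :: "nat \<Rightarrow> 'f::{finite,field} list \<Rightarrow> 'f list \<Rightarrow> 'r \<Rightarrow> chstate list \<Rightarrow> 'f list"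
    and L N1 N2 n :: nat and \<Theta> :: "'r pmf" and d1 d2 :: real
  defines "P \<equiv> joint_pmf L N1 N2 \<Theta> n d1 d2"
  assumes f_len: "\<And>i w1 w2 \<theta> ss. length (f i w1 w2 \<theta> ss) = L"
    and i: "i \<in> {1..n}" and d1: "0 \<le> d1" "d1 < 1"
  shows "cmi P (Xin f i) fst (bob_view f i)
           = (cond_entropy_rv P fst (bob_view f i) - cond_entropy_rv P fst (bob_view f (Suc i))) / (1 - d1)"
proof -
  let ?H = "cond_entropy_rv P fst (bob_view f i)"
  let ?G = "cond_entropy_rv P fst (\<lambda>\<omega>. (Xin f i \<omega>, bob_view f i \<omega>))"
  have cmi: "cmi P (Xin f i) fst (bob_view f i) = ?H - ?G"
    unfolding P_def by (rule cmi_input_view[OF f_len])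
  have step: "cond_entropy_rv P fst (bob_view f (Suc i)) = (1 - d1) * ?G + d1 * ?H"
    unfolding P_def by (rule entropy_view_step[OF f_len i]) (use d1 in auto)
  have "?H - cond_entropy_rv P fst (bob_view f (Suc i)) = (1 - d1) * cmi P (Xin f i) fst (bob_view f i)"
    unfolding cmi step by (simp add: algebra_simps)
  then show ?thesis using d1 by simp
qed

theorem lemma9:
  fixes L N1 N2 n :: nat
    and \<delta>1 \<delta>2 \<epsilon> :: real
    and \<Theta> :: "'r pmf"
    and f :: "nat \<Rightarrow> 'f::{finite,field} list \<Rightarrow> 'f list \<Rightarrow> 'r \<Rightarrow> chstate list \<Rightarrow> 'f list"
    and \<phi>1 :: "'f list option list \<Rightarrow> 'f list"
  assumes d1: "0 < \<delta>1" "\<delta>1 < 1"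
    and d2: "0 < \<delta>2" "\<delta>2 < 1"
    and eps: "0 < \<epsilon>" "\<epsilon> \<le> 1/2"
    and f_len: "\<And>i w1 w2 \<theta> ss. length (f i w1 w2 \<theta> ss) = L"
    and dec: "measure_pmf.prob (joint_pmf L N1 N2 \<Theta> n \<delta>1 \<delta>2)
                {\<omega>. \<phi>1 (Y1past f (n + 1) \<omega>) \<noteq> fst \<omega>} < \<epsilon>"
  shows "(\<Sum>i = 1..n. cmi (joint_pmf L N1 N2 \<Theta> n \<delta>1 \<delta>2) (Xin f i) fst
            (\<lambda>\<omega>. (Y1past f i \<omega>, Spast i (snd (snd (snd \<omega>))))))
         \<ge> ((1 - \<epsilon>) * real N1 * real L * log 2 (real CARD('f)) - h2 \<epsilon>) / (1 - \<delta>1)"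
proof -
  define P :: "('f list \<times> 'f list \<times> 'r \<times> (nat \<Rightarrow> chstate)) pmf"
    where "P = joint_pmf L N1 N2 \<Theta> n \<delta>1 \<delta>2"
  define H where "H i = cond_entropy_rv P fst (bob_view f i)" for i
  define Q where "Q = real (L * N1) * log 2 (real CARD('f))"
  have cmi_H: "cmi P (Xin f i) fst (bob_view f i) = (H i - H (Suc i)) / (1 - \<delta>1)"
    if "i \<in> {1..n}" for i
    unfolding H_def P_def using d1 by (intro cmi_input_view_telescoping[OF f_len that]) auto
  have "(\<Sum>i = 1..n. cmi P (Xin f i) fst (bob_view f i)) = (H 1 - H (Suc n)) / (1 - \<delta>1)"
    using sum_Suc_diff[of 1 n "\<lambda>i. - H i"] by (simp add: cmi_H sum_divide_distrib[symmetric])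
  moreover have "H 1 = Q"
    unfolding H_def P_def Q_def by (rule entropy_view_first)
  moreover have "H (Suc n) \<le> h2 \<epsilon> + \<epsilon> * Q"
    unfolding H_def P_def Q_def by (rule entropy_view_last[OF f_len less_imp_le[OF dec] eps])
  ultimately show ?thesis
    using d1 unfolding P_def Q_def bob_view_def[abs_def]
    by (simp add: divide_right_mono algebra_simps)
qed

end
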